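(* Let $T:\mathbb{R}^n\to\mathbb{R}^m$ and $S:\mathbb{R}^m\to\mathbb{R}^k$ be linear maps and $1\le p\le\infty$. Then $\|ST\|_p\le\sigma_1(T)\|S\|_p$. Moreover, if $S$ is injective and $p<\infty$, then equality holds if and only if $\sigma_1(T)=\sigma_m(T)$.
   Context: For a linear map $A:\mathbb{R}^a\to\mathbb{R}^b$ (Euclidean norms), its singular values are $\sigma_i(A)=\max\{\min\{|Au|:u\in U,|u|=1\}:U\subseteq\mathbb{R}^a,\ \dim U=i\}$ for $1\le i\le a$, and $\sigma_i(A)=0$ for $i>a$; thus $\sigma_1(A)\ge\sigma_2(A)\ge\cdots\ge0$ (equivalently, the singular values from a singular value decomposition, padded with zeros). The Schatten $p$-norm is $\|A\|_p=(\sum_i\sigma_i(A)^p)^{1/p}$ for $1\le p<\infty$, and $\|A\|_\infty=\sigma_1(A)$. *)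

theory Defs
  imports "HOL-Analysis.Analysis"
begin

text \<open>Singular values of a linear map A between Euclidean spaces, via the
  max-min characterisation: for 1 <= i <= dim of the domain,
  sigma_i(A) = max over i-dimensional subspaces U of min of |A u| over unit u in U;
  sigma_i(A) = 0 otherwise (in particular for i > dim of the domain).
  The max and min are attained (compactness), so Sup and Inf are used.\<close>
definition singular_value :: "('a::euclidean_space \<Rightarrow> 'b::real_normed_vector) \<Rightarrow> nat \<Rightarrow> real" where
  "singular_value A i =
     (if 1 \<le> i \<and> i \<le> DIM('a)
      then Sup {Inf {norm (A u) | u. u \<in> U \<and> norm u = 1} | U. subspace U \<and> dim U = i}
      else 0)"

text \<open>Schatten p-norm, 1 <= p <= infinity (p as an extended real).  For finite p the
  sum over all i reduces to i = 1..DIM of the domain since the others vanish.\<close>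
definition schatten_norm :: "ereal \<Rightarrow> ('a::euclidean_space \<Rightarrow> 'b::real_normed_vector) \<Rightarrow> real" where
  "schatten_norm p A =
     (if p = \<infinity> then singular_value A 1
      else (\<Sum>i = 1..DIM('a). singular_value A i powr real_of_ereal p) powr (1 / real_of_ereal p))"

end

theory Submission
  imports Defs
begin

text \<open>Every \<open>i\<close>-dimensional subspace \<open>U\<close> contains a unit vector \<open>u\<close> that \<open>T\<close> maps into a subspace of
  codimension less than \<open>i\<close> on which \<open>\<parallel>S y\<parallel> \<le> \<sigma>\<^sub>i(S) \<parallel>y\<parallel>\<close>, so \<open>\<sigma>\<^sub>i(S T) \<le> \<sigma>\<^sub>1(T) \<sigma>\<^sub>i(S)\<close> for every \<open>i\<close>;
  summing \<open>p\<close>-th powers gives the inequality, and for \<open>p < \<infinity>\<close> equality holds iff it holds termwise.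
  If \<open>\<sigma>\<^sub>1(T) = \<sigma>\<^sub>m(T) = c\<close>, then \<open>T T\<^sup>* = c\<^sup>2 I\<close> and \<open>T\<^sup>*\<close> carries the subspaces realising \<open>\<sigma>\<^sub>i(S)\<close> to
  subspaces on which \<open>\<parallel>S T u\<parallel> \<ge> c \<sigma>\<^sub>i(S) \<parallel>u\<parallel>\<close>. Conversely, computing the Frobenius norm of \<open>S T\<close> in a
  singular basis \<open>w\<close> of \<open>S\<close> turns termwise equality into \<open>\<Sum>\<^sub>l \<parallel>S w\<^sub>l\<parallel>\<^sup>2 (c\<^sup>2 - \<parallel>T\<^sup>* w\<^sub>l\<parallel>\<^sup>2) = 0\<close>;
  injectivity of \<open>S\<close> makes every weight positive, so \<open>\<parallel>T\<^sup>* w\<^sub>l\<parallel> = c\<close>, whence again \<open>T T\<^sup>* = c\<^sup>2 I\<close> and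
  \<open>\<sigma>\<^sub>m(T) \<ge> c\<close>. Singular bases are built by maximising \<open>\<parallel>A x\<parallel>\<close> on successively smaller unit spheres,
  and the max-min definition is matched with \<open>\<parallel>A v\<^sub>i\<parallel>\<close> as in the Courant-Fischer theorem.\<close>

section \<open>Singular values\<close>

lemma exists_unit_vector_in_subspace:
  fixes U :: "'a::euclidean_space set"
  assumes "subspace U" and "0 < dim U"
  shows "\<exists>u\<in>U. norm u = 1"
proof -
  have "\<not> U \<subseteq> {0}" using assms(2) dim_eq_0[of U] by linarith
  then obtain x where "x \<in> U" "x \<noteq> 0" by blast
  then show ?thesis
    using assms(1) by (intro bexI[of _ "x /\<^sub>R norm x"]) (simp_all add: subspace_scale)
qed

lemma exists_unit_vector_mapped_into_subspace:
  fixes T :: "'a::euclidean_space \<Rightarrow> 'b::euclidean_space"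
  assumes "linear T" and "subspace U" and "subspace W" and "DIM('b) < dim U + dim W"
  obtains u where "u \<in> U" and "norm u = 1" and "T u \<in> W"
proof -
  have "\<exists>x\<in>U. x \<noteq> 0 \<and> T x \<in> W"
  proof (cases "\<exists>x\<in>U. x \<noteq> 0 \<and> T x = 0")
    case True
    then show ?thesis using assms(3) subspace_0 by metis
  next
    case False
    have "inj_on T U"
    proof (rule inj_onI)
      fix x y assume "x \<in> U" "y \<in> U" "T x = T y"
      then have "x - y \<in> U" "T (x - y) = 0"
        using assms(1,2) by (simp_all add: subspace_diff linear_diff)
      then show "x = y" using False by auto
    qed
    then have "dim (T ` U) = dim U"
      using dim_image_eq[OF assms(1), of U] span_eq_iff[THEN iffD2, OF assms(2)] by simp
    then have "dim {x + y |x y. x \<in> T ` U \<and> y \<in> W} + dim (T ` U \<inter> W) = dim U + dim W"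
      using dim_sums_Int[OF linear_subspace_image[OF assms(1,2)] assms(3)] by simp
    then have "0 < dim (T ` U \<inter> W)"
      using assms(4) dim_subset_UNIV[of "{x + y |x y. x \<in> T ` U \<and> y \<in> W}"] by linarith
    then obtain y where "y \<in> T ` U \<inter> W" "norm y = 1"
      using exists_unit_vector_in_subspace
        subspace_inter[OF linear_subspace_image[OF assms(1,2)] assms(3)] by blast
    then obtain x where "x \<in> U" "T x \<in> W" "T x \<noteq> 0" by force
    moreover from \<open>T x \<noteq> 0\<close> have "x \<noteq> 0" using linear_0[OF assms(1)] by auto
    ultimately show ?thesis by blast
  qed
  then obtain x where x: "x \<in> U" "x \<noteq> 0" "T x \<in> W" by blast
  have "T (x /\<^sub>R norm x) \<in> W"
    using x(3) assms(1,3) by (simp add: linear_scale subspace_scale)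
  then show thesis using x(1,2) assms(2) that[of "x /\<^sub>R norm x"] by (simp add: subspace_scale)
qed

lemma singular_value_eq_0:
  assumes "i = 0 \<or> DIM('a) < i"
  shows "singular_value (A :: 'a::euclidean_space \<Rightarrow> 'b::real_normed_vector) i = 0"
  using assms by (auto simp: singular_value_def)

lemma singular_value_ge:
  fixes A :: "'a::euclidean_space \<Rightarrow> 'b::real_normed_vector"
  assumes "linear A" and "subspace U" and "1 \<le> i" and "i \<le> dim U"
    and "\<And>u. u \<in> U \<Longrightarrow> a * norm u \<le> norm (A u)"
  shows "a \<le> singular_value A i"
proof -
  define m where "m V = Inf {norm (A u) | u. u \<in> V \<and> norm u = 1}" for V :: "'a set"
  obtain V where V: "subspace V" "V \<subseteq> U" "dim V = i"
    using choose_subspace_of_subspace[OF assms(4)] assms(2) span_eq_iff by metis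
  obtain B where B: "\<And>x. norm (A x) \<le> B * norm x"
    using linear_bounded_pos[OF assms(1)] by blast
  have m_le: "m W \<le> norm (A u)" if "u \<in> W" "norm u = 1" for u W
    unfolding m_def by (rule cInf_lower) (use that in \<open>auto intro: bdd_belowI[of _ 0]\<close>)
  have "a \<le> m V"
    unfolding m_def
  proof (rule cInf_greatest)
    show "{norm (A u) | u. u \<in> V \<and> norm u = 1} \<noteq> {}"
      using exists_unit_vector_in_subspace[OF V(1)] V(3) assms(3) by auto
  qed (use V(2) assms(5) in force)
  also have "m V \<le> Sup {m W | W. subspace W \<and> dim W = i}"
  proof (rule cSup_upper)
    show "bdd_above {m W | W. subspace W \<and> dim W = i}"
    proof (rule bdd_aboveI, safe)
      fix W :: "'a set" assume "subspace W" "i = dim W"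
      then obtain u where "u \<in> W" "norm u = 1"
        using exists_unit_vector_in_subspace[of W] assms(3) by auto
      then show "m W \<le> B" using m_le[of u W] B[of u] by simp
    qed
  qed (use V in blast)
  also have "\<dots> = singular_value A i"
    using assms(3) V dim_subset_UNIV[of V] by (simp add: singular_value_def m_def)
  finally show ?thesis .
qed

lemma singular_value_le:
  fixes A :: "'a::euclidean_space \<Rightarrow> 'b::real_normed_vector"
  assumes "0 \<le> a"
    and "\<And>U. subspace U \<Longrightarrow> dim U = i \<Longrightarrow> \<exists>u\<in>U. norm u = 1 \<and> norm (A u) \<le> a"
  shows "singular_value A i \<le> a"
proof (cases "1 \<le> i \<and> i \<le> DIM('a)")
  case False
  then show ?thesis using assms(1) by (simp add: singular_value_eq_0 not_le)
next
  case True
  define m where "m V = Inf {norm (A u) | u. u \<in> V \<and> norm u = 1}" for V :: "'a set"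
  obtain V :: "'a set" where "subspace V" "dim V = i"
    using choose_subspace_of_subspace[of i UNIV] True by auto
  then have "{m W | W. subspace W \<and> dim W = i} \<noteq> {}" by blast
  moreover have "m W \<le> a" if W: "subspace W" "dim W = i" for W
  proof -
    obtain u where "u \<in> W" "norm u = 1" "norm (A u) \<le> a" using assms(2)[OF W] by blast
    moreover have "m W \<le> norm (A u)"
      unfolding m_def by (rule cInf_lower) (use \<open>u \<in> W\<close> \<open>norm u = 1\<close> in \<open>auto intro: bdd_belowI[of _ 0]\<close>)
    ultimately show ?thesis by simp
  qed
  ultimately have "Sup {m W | W. subspace W \<and> dim W = i} \<le> a" by (auto intro: cSup_least)
  then show ?thesis using True by (simp add: singular_value_def m_def)
qed

lemma singular_value_le_subspace:
  fixes A :: "'a::euclidean_space \<Rightarrow> 'b::real_normed_vector"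
  assumes "0 \<le> a" and "subspace W" and "DIM('a) < dim W + i"
    and "\<And>x. x \<in> W \<Longrightarrow> norm (A x) \<le> a * norm x"
  shows "singular_value A i \<le> a"
proof (rule singular_value_le[OF assms(1)])
  fix U :: "'a set" assume "subspace U" "dim U = i"
  then obtain u where "u \<in> U" "norm u = 1" "u \<in> W"
    using exists_unit_vector_mapped_into_subspace[OF linear_id _ assms(2), of U] assms(3) by auto
  then show "\<exists>u\<in>U. norm u = 1 \<and> norm (A u) \<le> a" using assms(4)[of u] by auto
qed

lemma singular_value_nonneg:
  fixes A :: "'a::euclidean_space \<Rightarrow> 'b::real_normed_vector"
  assumes "linear A"
  shows "0 \<le> singular_value A i"
proof (cases "1 \<le> i \<and> i \<le> DIM('a)")
  case True
  then show ?thesis by (intro singular_value_ge[OF assms subspace_UNIV]) auto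
qed (auto simp: singular_value_eq_0)

lemma norm_le_singular_value_1:
  fixes A :: "'a::euclidean_space \<Rightarrow> 'b::real_normed_vector"
  assumes "linear A"
  shows "norm (A x) \<le> singular_value A 1 * norm x"
proof (cases "x = 0")
  case False
  have "norm (A x) / norm x \<le> singular_value A 1"
  proof (rule singular_value_ge[OF assms subspace_span])
    show "1 \<le> dim (span {x})" using False by (simp add: dim_insert)
    fix u assume "u \<in> span {x}"
    then obtain t where "u = t *\<^sub>R x" by (auto simp: span_singleton)
    then show "norm (A x) / norm x * norm u \<le> norm (A u)"
      using False by (simp add: linear_scale[OF assms])
  qed simp
  then show ?thesis using False by (simp add: divide_le_eq mult.commute)
qed (simp add: linear_0[OF assms])

lemma singular_value_le_singular_value_1:
  fixes A :: "'a::euclidean_space \<Rightarrow> 'b::real_normed_vector"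
  assumes "linear A"
  shows "singular_value A i \<le> singular_value A 1"
proof (cases "i = 0")
  case True
  then show ?thesis using singular_value_nonneg[OF assms] by (simp add: singular_value_eq_0)
next
  case False
  then show ?thesis
    using norm_le_singular_value_1[OF assms]
    by (intro singular_value_le_subspace[OF singular_value_nonneg[OF assms] subspace_UNIV]) auto
qed

section \<open>Singular bases\<close>

definition orthonormal_family :: "nat \<Rightarrow> (nat \<Rightarrow> 'a::real_inner) \<Rightarrow> bool" where
  "orthonormal_family N v \<longleftrightarrow>
     (\<forall>j\<in>{1..N}. norm (v j) = 1) \<and> (\<forall>i\<in>{1..N}. \<forall>j\<in>{1..N}. i \<noteq> j \<longrightarrow> v i \<bullet> v j = 0)"

definition right_singular_vectors :: "('a::real_inner \<Rightarrow> 'b::real_inner) \<Rightarrow> nat \<Rightarrow> (nat \<Rightarrow> 'a) \<Rightarrow> bool" where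
  "right_singular_vectors A N v \<longleftrightarrow> orthonormal_family N v
     \<and> (\<forall>i\<in>{1..N}. \<forall>j\<in>{1..N}. i \<noteq> j \<longrightarrow> A (v i) \<bullet> A (v j) = 0)
     \<and> (\<forall>i\<in>{1..N}. \<forall>j\<in>{1..N}. i \<le> j \<longrightarrow> norm (A (v j)) \<le> norm (A (v i)))"

lemma linear_coeff_eq_0_if_quadratic_nonneg:
  fixes b c :: real
  assumes "\<And>t. 0 \<le> 2 * t * b + t\<^sup>2 * c"
  shows "b = 0"
proof -
  define d where "d = \<bar>c\<bar> + 1"
  have "d > 0" "c - 2 * d < 0" unfolding d_def by auto
  have "0 \<le> d\<^sup>2 * (2 * (- b / d) * b + (- b / d)\<^sup>2 * c)"
    using assms[of "- b / d"] by simp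
  also have "\<dots> = b\<^sup>2 * (c - 2 * d)"
    using \<open>d > 0\<close> by (simp add: field_simps power2_eq_square)
  finally have "b\<^sup>2 \<le> 0"
    using \<open>c - 2 * d < 0\<close> by (simp add: zero_le_mult_iff)
  then show ?thesis by simp
qed

lemma right_singular_vectors_Suc:
  assumes "right_singular_vectors A d w" and "norm x = 1"
    and "\<And>j. j \<in> {1..d} \<Longrightarrow> x \<bullet> w j = 0 \<and> A x \<bullet> A (w j) = 0 \<and> norm (A (w j)) \<le> norm (A x)"
  shows "right_singular_vectors A (Suc d) (\<lambda>j. if j = 1 then x else w (j - 1))"
proof -
  have shift: "j - 1 \<in> {1..d}" if "j \<in> {1..Suc d}" "j \<noteq> 1" for j
    using that by auto
  have w: "orthonormal_family d w" "\<forall>i\<in>{1..d}. \<forall>j\<in>{1..d}. i \<noteq> j \<longrightarrow> A (w i) \<bullet> A (w j) = 0"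
    "\<forall>i\<in>{1..d}. \<forall>j\<in>{1..d}. i \<le> j \<longrightarrow> norm (A (w j)) \<le> norm (A (w i))"
    using assms(1) unfolding right_singular_vectors_def by blast+
  show ?thesis
    unfolding right_singular_vectors_def orthonormal_family_def
  proof (intro conjI ballI impI)
    fix j assume "j \<in> {1..Suc d}"
    then show "norm (if j = 1 then x else w (j - 1)) = 1"
      using assms(2) w(1) shift by (auto simp: orthonormal_family_def)
  next
    fix i j assume "i \<in> {1..Suc d}" "j \<in> {1..Suc d}" "i \<noteq> j"
    then show "(if i = 1 then x else w (i - 1)) \<bullet> (if j = 1 then x else w (j - 1)) = 0"
      and "A (if i = 1 then x else w (i - 1)) \<bullet> A (if j = 1 then x else w (j - 1)) = 0"
      using assms(3) w(1,2) shift[of i] shift[of j]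
      by (auto simp: orthonormal_family_def inner_commute)
  next
    fix i j assume "i \<in> {1..Suc d}" "j \<in> {1..Suc d}" "i \<le> j"
    then show "norm (A (if j = 1 then x else w (j - 1))) \<le> norm (A (if i = 1 then x else w (i - 1)))"
      using assms(3) w(3) shift[of i] shift[of j] by auto
  qed
qed

lemma exists_norm_maximiser_on_subspace:
  fixes A :: "'a::euclidean_space \<Rightarrow> 'b::real_normed_vector"
  assumes "linear A" and "subspace V" and "0 < dim V"
  obtains x where "x \<in> V" and "norm x = 1" and "\<And>y. y \<in> V \<Longrightarrow> norm (A y) \<le> norm (A x) * norm y"
proof -
  have "V \<inter> sphere 0 1 \<noteq> {}"
    using exists_unit_vector_in_subspace[OF assms(2,3)] by auto
  moreover have "compact (V \<inter> sphere 0 1)"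
    using closed_subspace[OF assms(2)] compact_sphere by (rule closed_Int_compact)
  moreover have "continuous_on (V \<inter> sphere 0 1) (\<lambda>x. norm (A x))"
    using assms(1) by (intro continuous_on_norm linear_continuous_on) (simp add: linear_conv_bounded_linear)
  ultimately obtain x where x: "x \<in> V \<inter> sphere 0 1" and max: "\<forall>y\<in>V \<inter> sphere 0 1. norm (A y) \<le> norm (A x)"
    using continuous_attains_sup by blast
  have "norm (A y) \<le> norm (A x) * norm y" if "y \<in> V" for y
  proof (cases "y = 0")
    case False
    then have "norm (A (y /\<^sub>R norm y)) \<le> norm (A x)"
      using max that assms(2) by (simp add: subspace_scale)
    then have "norm (A y) / norm y \<le> norm (A x)"
      by (simp add: linear_scale[OF assms(1)] divide_inverse_commute)
    then show ?thesis
      using False by (simp add: divide_le_eq mult.commute)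
  qed (simp add: linear_0[OF assms(1)])
  then show thesis using x that by auto
qed

text \<open>The first variation of \<open>\<parallel>A (x + t y)\<parallel>\<^sup>2 \<le> \<parallel>A x\<parallel>\<^sup>2 \<parallel>x + t y\<parallel>\<^sup>2\<close> at \<open>t = 0\<close>.\<close>
lemma inner_image_eq_0_if_norm_maximiser:
  fixes A :: "'a::real_inner \<Rightarrow> 'b::real_inner"
  assumes "linear A" and "subspace V" and "x \<in> V" and "norm x = 1"
    and "\<And>y. y \<in> V \<Longrightarrow> norm (A y) \<le> norm (A x) * norm y"
    and "y \<in> V" and "x \<bullet> y = 0"
  shows "A x \<bullet> A y = 0"
proof -
  define M where "M = norm (A x)"
  have "- (A x \<bullet> A y) = 0"
  proof (rule linear_coeff_eq_0_if_quadratic_nonneg)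
    fix t :: real
    have "x + t *\<^sub>R y \<in> V" using assms(2,3,6) by (simp add: subspace_add subspace_scale)
    then have "(norm (A (x + t *\<^sub>R y)))\<^sup>2 \<le> (M * norm (x + t *\<^sub>R y))\<^sup>2"
      using assms(5) unfolding M_def by (simp add: power_mono)
    then have "(A x + t *\<^sub>R A y) \<bullet> (A x + t *\<^sub>R A y) \<le> M\<^sup>2 * ((x + t *\<^sub>R y) \<bullet> (x + t *\<^sub>R y))"
      by (simp add: power2_norm_eq_inner linear_add[OF assms(1)] linear_scale[OF assms(1)] power_mult_distrib)
    moreover have "x \<bullet> x = 1" "A x \<bullet> A x = M\<^sup>2"
      using assms(4) unfolding M_def by (simp_all add: norm_eq_1 power2_norm_eq_inner)
    ultimately have "M\<^sup>2 + 2 * t * (A x \<bullet> A y) + t\<^sup>2 * (A y \<bullet> A y) \<le> M\<^sup>2 * (1 + t\<^sup>2 * (y \<bullet> y))"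
      using assms(7) by (simp add: inner_add_left inner_add_right inner_commute power2_eq_square algebra_simps)
    then show "0 \<le> 2 * t * - (A x \<bullet> A y) + t\<^sup>2 * (M\<^sup>2 * (y \<bullet> y) - A y \<bullet> A y)"
      by (simp add: algebra_simps)
  qed
  then show ?thesis by simp
qed

lemma right_singular_vectors_in_subspace:
  fixes A :: "'a::euclidean_space \<Rightarrow> 'b::real_inner"
  assumes "linear A" and "subspace V" and "dim V = d"
  shows "\<exists>v. right_singular_vectors A d v \<and> v ` {1..d} \<subseteq> V"
  using assms(2,3)
proof (induction d arbitrary: V)
  case 0
  then show ?case by (auto simp: right_singular_vectors_def orthonormal_family_def)
next
  case (Suc d)
  obtain x where x: "x \<in> V" "norm x = 1" and max: "\<And>y. y \<in> V \<Longrightarrow> norm (A y) \<le> norm (A x) * norm y"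
    using exists_norm_maximiser_on_subspace[OF assms(1) Suc.prems(1)] Suc.prems(2) by auto
  define V' where "V' = V \<inter> {y. x \<bullet> y = 0}"
  have "subspace V'" unfolding V'_def by (rule subspace_inter[OF Suc.prems(1) subspace_hyperplane])
  have "dim {y \<in> V. \<forall>z\<in>span {x}. orthogonal z y} + dim (span {x}) = dim V"
    using x Suc.prems(1) by (intro dim_subspace_orthogonal_to_vectors subspace_span span_minimal) auto
  moreover have "{y \<in> V. \<forall>z\<in>span {x}. orthogonal z y} = V'"
    unfolding V'_def by (auto simp: span_singleton orthogonal_def)
  moreover have "dim (span {x}) = 1" using x by (auto simp: dim_insert)
  ultimately have "dim V' = d" using Suc.prems(2) by simp
  then obtain w where w: "right_singular_vectors A d w" "w ` {1..d} \<subseteq> V'"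
    using Suc.IH[OF \<open>subspace V'\<close>] by blast
  have "x \<bullet> w j = 0 \<and> A x \<bullet> A (w j) = 0 \<and> norm (A (w j)) \<le> norm (A x)" if "j \<in> {1..d}" for j
  proof -
    have "w j \<in> V" "x \<bullet> w j = 0" "norm (w j) = 1"
      using w that unfolding V'_def right_singular_vectors_def orthonormal_family_def
      by (auto simp: image_subset_iff)
    then show ?thesis
      using inner_image_eq_0_if_norm_maximiser[OF assms(1) Suc.prems(1) x max] max[of "w j"] by simp
  qed
  then have "right_singular_vectors A (Suc d) (\<lambda>j. if j = 1 then x else w (j - 1))"
    by (rule right_singular_vectors_Suc[OF w(1) x(2)])
  moreover have "(\<lambda>j. if j = 1 then x else w (j - 1)) ` {1..Suc d} \<subseteq> V"
    using w(2) x(1) unfolding V'_def by (auto simp: image_subset_iff Suc_le_eq)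
  ultimately show ?case by blast
qed

lemma right_singular_vectors_exist:
  fixes A :: "'a::euclidean_space \<Rightarrow> 'b::real_inner"
  assumes "linear A"
  obtains v where "right_singular_vectors A DIM('a) v"
  using right_singular_vectors_in_subspace[OF assms subspace_UNIV] by auto

lemma orthonormal_family_inner:
  assumes "orthonormal_family N v" and "i \<in> {1..N}" and "j \<in> {1..N}"
  shows "v i \<bullet> v j = (if i = j then 1 else 0)"
  using assms by (auto simp: orthonormal_family_def norm_eq_1)

lemma orthonormal_family_independent:
  fixes v :: "nat \<Rightarrow> 'a::euclidean_space"
  assumes "orthonormal_family N v" and "I \<subseteq> {1..N}"
  shows "inj_on v I" and "independent (v ` I)"
proof -
  have unit: "v i \<bullet> v i = 1" if "i \<in> I" for i
    using assms that by (auto simp: orthonormal_family_def norm_eq_1)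
  have orth: "v i \<bullet> v j = 0" if "i \<in> I" "j \<in> I" "i \<noteq> j" for i j
    using assms that unfolding orthonormal_family_def by blast
  show "inj_on v I"
  proof (rule inj_onI)
    fix i j assume "i \<in> I" "j \<in> I" "v i = v j"
    then show "i = j" using orth[of i j] unit[of i] by (cases "i = j") auto
  qed
  show "independent (v ` I)"
  proof (rule pairwise_orthogonal_independent)
    show "pairwise orthogonal (v ` I)"
      by (auto simp: pairwise_def orthogonal_def intro: orth)
    show "0 \<notin> v ` I" using unit by force
  qed
qed

lemma card_le_dim_if_orthonormal_family_subset:
  fixes v :: "nat \<Rightarrow> 'a::euclidean_space"
  assumes "orthonormal_family N v" and "I \<subseteq> {1..N}" and "v ` I \<subseteq> W"
  shows "card I \<le> dim W"
  using independent_card_le_dim[OF assms(3) orthonormal_family_independent(2)[OF assms(1,2)]]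
    card_image[OF orthonormal_family_independent(1)[OF assms(1,2)]] by simp

lemma orthonormal_family_expansion:
  fixes v :: "nat \<Rightarrow> 'a::euclidean_space"
  assumes "orthonormal_family DIM('a) v"
  shows "x = (\<Sum>j=1..DIM('a). (x \<bullet> v j) *\<^sub>R v j)"
proof -
  define y where "y = x - (\<Sum>j=1..DIM('a). (x \<bullet> v j) *\<^sub>R v j)"
  have span: "UNIV \<subseteq> span (v ` {1..DIM('a)})"
  proof (rule card_ge_dim_independent)
    show "independent (v ` {1..DIM('a)})"
      using orthonormal_family_independent(2)[OF assms order_refl] .
    show "dim (UNIV :: 'a set) \<le> card (v ` {1..DIM('a)})"
      using card_image[OF orthonormal_family_independent(1)[OF assms order_refl]] by simp
  qed (rule subset_UNIV)
  have orth: "orthogonal y (v k)" if "k \<in> {1..DIM('a)}" for k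
  proof -
    have "(\<Sum>j=1..DIM('a). (x \<bullet> v j) *\<^sub>R v j) \<bullet> v k
        = (\<Sum>j=1..DIM('a). if j = k then x \<bullet> v k else 0)"
      unfolding inner_sum_left inner_scaleR_left
      by (intro sum.cong refl) (simp add: orthonormal_family_inner[OF assms _ that])
    then show ?thesis
      using that by (simp add: y_def inner_diff_left orthogonal_def)
  qed
  have "orthogonal y y"
  proof (rule orthogonal_to_span[where S = "v ` {1..DIM('a)}"])
    show "y \<in> span (v ` {1..DIM('a)})" using span by blast
  qed (use orth in blast)
  then show ?thesis by (simp add: y_def orthogonal_def)
qed

lemma norm_image_sq_expansion:
  fixes v :: "nat \<Rightarrow> 'a::euclidean_space" and A :: "'a \<Rightarrow> 'b::real_inner"
  assumes "linear A" and "orthonormal_family DIM('a) v"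
    and "\<And>i j. i \<in> {1..DIM('a)} \<Longrightarrow> j \<in> {1..DIM('a)} \<Longrightarrow> i \<noteq> j \<Longrightarrow> A (v i) \<bullet> A (v j) = 0"
  shows "(norm (A x))\<^sup>2 = (\<Sum>j=1..DIM('a). (x \<bullet> v j)\<^sup>2 * (norm (A (v j)))\<^sup>2)"
proof -
  have "A x = (\<Sum>j=1..DIM('a). (x \<bullet> v j) *\<^sub>R A (v j))"
    by (subst orthonormal_family_expansion[OF assms(2), of x])
       (simp add: linear_sum[OF assms(1)] linear_scale[OF assms(1)])
  then have "(norm (A x))\<^sup>2
      = (\<Sum>i=1..DIM('a). \<Sum>j=1..DIM('a). (x \<bullet> v i) * ((x \<bullet> v j) * (A (v j) \<bullet> A (v i))))"
    by (simp add: power2_norm_eq_inner inner_sum_left inner_sum_right sum_distrib_left)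
  also have "\<dots> = (\<Sum>i=1..DIM('a). \<Sum>j=1..DIM('a). if j = i then (x \<bullet> v i)\<^sup>2 * (A (v i) \<bullet> A (v i)) else 0)"
    by (intro sum.cong refl) (auto simp: assms(3) power2_eq_square)
  finally show ?thesis by (simp add: dot_square_norm)
qed

lemma parseval_orthonormal_family:
  fixes v :: "nat \<Rightarrow> 'a::euclidean_space"
  assumes "orthonormal_family DIM('a) v"
  shows "(norm x)\<^sup>2 = (\<Sum>j=1..DIM('a). (x \<bullet> v j)\<^sup>2)"
  using norm_image_sq_expansion[OF linear_id assms] assms by (simp add: orthonormal_family_def)

lemma norm_image_ge_if_right_singular_vectors:
  fixes A :: "'a::euclidean_space \<Rightarrow> 'b::real_inner"
  assumes "linear A" and "right_singular_vectors A DIM('a) v" and "0 \<le> a"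
    and "\<And>j. j \<in> {1..DIM('a)} \<Longrightarrow> x \<bullet> v j \<noteq> 0 \<Longrightarrow> a \<le> norm (A (v j))"
  shows "a * norm x \<le> norm (A x)"
proof -
  have v: "orthonormal_family DIM('a) v"
    "\<And>i j. i \<in> {1..DIM('a)} \<Longrightarrow> j \<in> {1..DIM('a)} \<Longrightarrow> i \<noteq> j \<Longrightarrow> A (v i) \<bullet> A (v j) = 0"
    using assms(2) unfolding right_singular_vectors_def by blast+
  have "(a * norm x)\<^sup>2 = (\<Sum>j=1..DIM('a). (x \<bullet> v j)\<^sup>2 * a\<^sup>2)"
    by (simp add: power_mult_distrib parseval_orthonormal_family[OF v(1)] sum_distrib_left mult.commute)
  also have "\<dots> \<le> (\<Sum>j=1..DIM('a). (x \<bullet> v j)\<^sup>2 * (norm (A (v j)))\<^sup>2)"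
  proof (rule sum_mono)
    fix j assume "j \<in> {1..DIM('a)}"
    then show "(x \<bullet> v j)\<^sup>2 * a\<^sup>2 \<le> (x \<bullet> v j)\<^sup>2 * (norm (A (v j)))\<^sup>2"
      using assms(3) assms(4)[of j] by (cases "x \<bullet> v j = 0") (simp_all add: mult_left_mono power_mono)
  qed
  also have "\<dots> = (norm (A x))\<^sup>2"
    by (rule norm_image_sq_expansion[OF assms(1) v, symmetric])
  finally show ?thesis by (rule power2_le_imp_le) simp
qed

lemma norm_image_le_if_right_singular_vectors:
  fixes A :: "'a::euclidean_space \<Rightarrow> 'b::real_inner"
  assumes "linear A" and "right_singular_vectors A DIM('a) v" and "0 \<le> a"
    and "\<And>j. j \<in> {1..DIM('a)} \<Longrightarrow> x \<bullet> v j \<noteq> 0 \<Longrightarrow> norm (A (v j)) \<le> a"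
  shows "norm (A x) \<le> a * norm x"
proof -
  have v: "orthonormal_family DIM('a) v"
    "\<And>i j. i \<in> {1..DIM('a)} \<Longrightarrow> j \<in> {1..DIM('a)} \<Longrightarrow> i \<noteq> j \<Longrightarrow> A (v i) \<bullet> A (v j) = 0"
    using assms(2) unfolding right_singular_vectors_def by blast+
  have "(norm (A x))\<^sup>2 = (\<Sum>j=1..DIM('a). (x \<bullet> v j)\<^sup>2 * (norm (A (v j)))\<^sup>2)"
    by (rule norm_image_sq_expansion[OF assms(1) v])
  also have "\<dots> \<le> (\<Sum>j=1..DIM('a). (x \<bullet> v j)\<^sup>2 * a\<^sup>2)"
  proof (rule sum_mono)
    fix j assume "j \<in> {1..DIM('a)}"
    then show "(x \<bullet> v j)\<^sup>2 * (norm (A (v j)))\<^sup>2 \<le> (x \<bullet> v j)\<^sup>2 * a\<^sup>2"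
      using assms(4)[of j] by (cases "x \<bullet> v j = 0") (simp_all add: mult_left_mono power_mono)
  qed
  also have "\<dots> = (a * norm x)\<^sup>2"
    by (simp add: power_mult_distrib parseval_orthonormal_family[OF v(1)] sum_distrib_left mult.commute)
  finally show ?thesis by (rule power2_le_imp_le) (use assms(3) in simp)
qed

lemma subspace_orthogonal_to_family:
  fixes v :: "nat \<Rightarrow> 'a::euclidean_space"
  assumes "orthonormal_family N v" and "J \<subseteq> {1..N}"
  shows "subspace {x. \<forall>j\<in>J. x \<bullet> v j = 0}"
    and "N - card J \<le> dim {x. \<forall>j\<in>J. x \<bullet> v j = 0}"
proof -
  show "subspace {x. \<forall>j\<in>J. x \<bullet> v j = 0}"
    by (auto simp: subspace_def inner_add_left)
  have "v ` ({1..N} - J) \<subseteq> {x. \<forall>j\<in>J. x \<bullet> v j = 0}"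
    using assms by (auto simp: orthonormal_family_inner)
  then have "card ({1..N} - J) \<le> dim {x. \<forall>j\<in>J. x \<bullet> v j = 0}"
    by (rule card_le_dim_if_orthonormal_family_subset[OF assms(1), rotated]) auto
  moreover have "card ({1..N} - J) = N - card J"
    using assms(2) by (simp add: card_Diff_subset finite_subset)
  ultimately show "N - card J \<le> dim {x. \<forall>j\<in>J. x \<bullet> v j = 0}" by simp
qed

lemma right_singular_vectors_minmax_subspaces:
  fixes A :: "'a::euclidean_space \<Rightarrow> 'b::real_inner"
  assumes "linear A" and "right_singular_vectors A DIM('a) v" and "i \<in> {1..DIM('a)}"
  obtains U W where "subspace U" and "i \<le> dim U" and "\<And>u. u \<in> U \<Longrightarrow> norm (A (v i)) * norm u \<le> norm (A u)"
    and "subspace W" and "DIM('a) < dim W + i" and "\<And>x. x \<in> W \<Longrightarrow> norm (A x) \<le> norm (A (v i)) * norm x"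
proof -
  have v: "orthonormal_family DIM('a) v"
    and decr: "\<And>j k. j \<in> {1..DIM('a)} \<Longrightarrow> k \<in> {1..DIM('a)} \<Longrightarrow> j \<le> k \<Longrightarrow> norm (A (v k)) \<le> norm (A (v j))"
    using assms(2) unfolding right_singular_vectors_def by blast+
  define U where "U = {x. \<forall>j\<in>{i<..DIM('a)}. x \<bullet> v j = 0}"
  define W where "W = {x. \<forall>j\<in>{1..<i}. x \<bullet> v j = 0}"
  have "{i<..DIM('a)} \<subseteq> {1..DIM('a)}" by (auto simp: subset_iff)
  note U_props = subspace_orthogonal_to_family[OF v this, folded U_def]
  have "{1..<i} \<subseteq> {1..DIM('a)}" using assms(3) by auto
  note W_props = subspace_orthogonal_to_family[OF v this, folded W_def]
  show thesis
  proof (rule that[of U W])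
    show "subspace U" "i \<le> dim U" "subspace W" "DIM('a) < dim W + i"
      using U_props W_props assms(3) by simp_all
    fix u assume "u \<in> U"
    then show "norm (A (v i)) * norm u \<le> norm (A u)"
      using assms(3) decr[of _ i]
      by (intro norm_image_ge_if_right_singular_vectors[OF assms(1,2)]) (auto simp: U_def)
  next
    fix x assume "x \<in> W"
    then show "norm (A x) \<le> norm (A (v i)) * norm x"
      using assms(3) decr[of i]
      by (intro norm_image_le_if_right_singular_vectors[OF assms(1,2)]) (auto simp: W_def)
  qed
qed

lemma singular_value_eq_norm_right_singular_vector:
  fixes A :: "'a::euclidean_space \<Rightarrow> 'b::real_inner"
  assumes "linear A" and "right_singular_vectors A DIM('a) v" and "i \<in> {1..DIM('a)}"
  shows "singular_value A i = norm (A (v i))"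
proof -
  obtain U W where U: "subspace U" "i \<le> dim U" "\<And>u. u \<in> U \<Longrightarrow> norm (A (v i)) * norm u \<le> norm (A u)"
    and W: "subspace W" "DIM('a) < dim W + i" "\<And>x. x \<in> W \<Longrightarrow> norm (A x) \<le> norm (A (v i)) * norm x"
    by (rule right_singular_vectors_minmax_subspaces[OF assms]) blast
  show ?thesis
    using singular_value_le_subspace[OF _ W] singular_value_ge[OF assms(1) U(1) _ U(2,3)] assms(3)
    by (simp add: antisym)
qed

lemma exists_subspace_singular_value_le_norm:
  fixes A :: "'a::euclidean_space \<Rightarrow> 'b::real_inner"
  assumes "linear A" and "i \<in> {1..DIM('a)}"
  obtains U where "subspace U" and "i \<le> dim U"
    and "\<And>u. u \<in> U \<Longrightarrow> singular_value A i * norm u \<le> norm (A u)"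
proof -
  obtain v where v: "right_singular_vectors A DIM('a) v"
    using right_singular_vectors_exist[OF assms(1)] .
  show thesis
    using right_singular_vectors_minmax_subspaces[OF assms(1) v assms(2)] that
    by (metis singular_value_eq_norm_right_singular_vector[OF assms(1) v assms(2)])
qed

lemma exists_subspace_norm_le_singular_value:
  fixes A :: "'a::euclidean_space \<Rightarrow> 'b::real_inner"
  assumes "linear A" and "1 \<le> i"
  obtains W where "subspace W" and "DIM('a) < dim W + i"
    and "\<And>x. x \<in> W \<Longrightarrow> norm (A x) \<le> singular_value A i * norm x"
proof (cases "i \<le> DIM('a)")
  case True
  obtain v where v: "right_singular_vectors A DIM('a) v"
    using right_singular_vectors_exist[OF assms(1)] .
  show thesis
    using right_singular_vectors_minmax_subspaces[OF assms(1) v] that assms(2) True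
    by (metis atLeastAtMost_iff singular_value_eq_norm_right_singular_vector[OF assms(1) v])
next
  case False
  then show thesis
    using that[of "{0}"] by (simp add: subspace_0 linear_0[OF assms(1)])
qed

section \<open>Singular values of a composition\<close>

lemma singular_value_comp_le:
  fixes T :: "'a::euclidean_space \<Rightarrow> 'b::euclidean_space" and S :: "'b \<Rightarrow> 'c::real_inner"
  assumes "linear T" and "linear S"
  shows "singular_value (S \<circ> T) i \<le> singular_value T 1 * singular_value S i"
proof (cases "i = 0")
  case True
  then show ?thesis by (simp add: singular_value_eq_0)
next
  case False
  then have "1 \<le> i" by simp
  then obtain W where W: "subspace W" "DIM('b) < dim W + i"
    and S_le: "\<And>y. y \<in> W \<Longrightarrow> norm (S y) \<le> singular_value S i * norm y"
    by (rule exists_subspace_norm_le_singular_value[OF assms(2)]) blast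
  show ?thesis
  proof (rule singular_value_le)
    show "0 \<le> singular_value T 1 * singular_value S i"
      using singular_value_nonneg[OF assms(1)] singular_value_nonneg[OF assms(2)] by simp
    fix U :: "'a set" assume "subspace U" "dim U = i"
    then obtain u where u: "u \<in> U" "norm u = 1" "T u \<in> W"
      using exists_unit_vector_mapped_into_subspace[OF assms(1) _ W(1)] W(2) by (metis add.commute)
    have "norm (S (T u)) \<le> singular_value S i * norm (T u)" by (rule S_le[OF u(3)])
    also have "\<dots> \<le> singular_value S i * singular_value T 1"
      using norm_le_singular_value_1[OF assms(1), of u] u(2) singular_value_nonneg[OF assms(2)]
      by (simp add: mult_left_mono)
    finally show "\<exists>u\<in>U. norm u = 1 \<and> norm ((S \<circ> T) u) \<le> singular_value T 1 * singular_value S i"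
      using u by (auto simp: mult.commute)
  qed
qed

section \<open>The equality case\<close>

lemma norm_adjoint_le:
  fixes T :: "'a::euclidean_space \<Rightarrow> 'b::euclidean_space"
  assumes "linear T"
  shows "norm (adjoint T y) \<le> singular_value T 1 * norm y"
proof -
  have "(norm (adjoint T y))\<^sup>2 = T (adjoint T y) \<bullet> y"
    by (simp add: power2_norm_eq_inner adjoint_clauses[OF assms])
  also have "\<dots> \<le> norm (T (adjoint T y)) * norm y" by (rule norm_cauchy_schwarz)
  also have "\<dots> \<le> singular_value T 1 * norm (adjoint T y) * norm y"
    using norm_le_singular_value_1[OF assms] by (simp add: mult_right_mono)
  finally show ?thesis
    using singular_value_nonneg[OF assms, of 1]
    by (cases "adjoint T y = 0") (simp_all add: power2_eq_square mult.assoc)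
qed

text \<open>The form \<open>c\<^sup>2 \<langle>x, y\<rangle> - \<langle>T\<^sup>* x, T\<^sup>* y\<rangle>\<close> is positive semidefinite and vanishes on the diagonal
  at every \<open>w l\<close>, hence \<open>w l\<close> lies in its kernel.\<close>
lemma coisometry_if_norm_adjoint_eq_on_basis:
  fixes T :: "'a::euclidean_space \<Rightarrow> 'b::euclidean_space"
  assumes "linear T" and "orthonormal_family DIM('b) w"
    and "\<And>y. norm (adjoint T y) \<le> c * norm y"
    and "\<And>l. l \<in> {1..DIM('b)} \<Longrightarrow> norm (adjoint T (w l)) = c"
  shows "T (adjoint T y) = c\<^sup>2 *\<^sub>R y"
proof -
  define B where "B x y = c\<^sup>2 * (x \<bullet> y) - adjoint T x \<bullet> adjoint T y" for x y
  have lin: "linear (adjoint T)" by (rule adjoint_linear[OF assms(1)])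
  have B_nonneg: "0 \<le> B x x" for x
  proof -
    have "(norm (adjoint T x))\<^sup>2 \<le> (c * norm x)\<^sup>2"
      using assms(3)[of x] by (simp add: power_mono)
    then show ?thesis by (simp add: B_def power2_norm_eq_inner power_mult_distrib)
  qed
  have "B (w l) y = 0" if l: "l \<in> {1..DIM('b)}" for l
  proof (rule linear_coeff_eq_0_if_quadratic_nonneg)
    fix t :: real
    have "B (w l) (w l) = 0"
      using assms(2) assms(4)[OF l] l
      by (simp add: B_def orthonormal_family_def power2_norm_eq_inner[symmetric])
    moreover have "B (w l + t *\<^sub>R y) (w l + t *\<^sub>R y) = B (w l) (w l) + 2 * t * B (w l) y + t\<^sup>2 * B y y"
      unfolding B_def
      by (simp add: linear_add[OF lin] linear_scale[OF lin] inner_add_left inner_add_right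
          inner_commute power2_eq_square algebra_simps)
    ultimately show "0 \<le> 2 * t * B (w l) y + t\<^sup>2 * B y y"
      using B_nonneg[of "w l + t *\<^sub>R y"] by simp
  qed
  moreover have "(c\<^sup>2 *\<^sub>R y - T (adjoint T y)) \<bullet> w l = B (w l) y" for l
    by (simp add: B_def inner_diff_left inner_diff_right adjoint_clauses[OF assms(1)] inner_commute)
  ultimately have "(c\<^sup>2 *\<^sub>R y - T (adjoint T y)) \<bullet> w l = 0" if "l \<in> {1..DIM('b)}" for l
    using that by simp
  then have "c\<^sup>2 *\<^sub>R y - T (adjoint T y) = 0"
    using orthonormal_family_expansion[OF assms(2), of "c\<^sup>2 *\<^sub>R y - T (adjoint T y)"] by simp
  then show ?thesis by simp
qed

lemma norm_adjoint_coisometry: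
  fixes T :: "'a::euclidean_space \<Rightarrow> 'b::euclidean_space"
  assumes "linear T" and "0 \<le> c" and "\<And>y. T (adjoint T y) = c\<^sup>2 *\<^sub>R y"
  shows "norm (adjoint T y) = c * norm y"
proof -
  have "(norm (adjoint T y))\<^sup>2 = y \<bullet> T (adjoint T y)"
    by (simp add: power2_norm_eq_inner adjoint_clauses[OF assms(1)] inner_commute)
  also have "\<dots> = (c * norm y)\<^sup>2"
    by (simp add: assms(3) power_mult_distrib power2_norm_eq_inner)
  finally show ?thesis using assms(2) by (simp add: power2_eq_iff_nonneg)
qed

lemma singular_value_comp_ge_coisometry:
  fixes T :: "'a::euclidean_space \<Rightarrow> 'b::euclidean_space" and S :: "'b \<Rightarrow> 'c::real_inner"
  assumes "linear T" and "linear S" and "0 < c" and "\<And>y. T (adjoint T y) = c\<^sup>2 *\<^sub>R y"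
    and "i \<in> {1..DIM('b)}"
  shows "c * singular_value S i \<le> singular_value (S \<circ> T) i"
proof -
  have lin: "linear (adjoint T)" by (rule adjoint_linear[OF assms(1)])
  have norm_adj: "norm (adjoint T y) = c * norm y" for y
    using norm_adjoint_coisometry[OF assms(1) _ assms(4)] assms(3) by simp
  obtain V where V: "subspace V" "i \<le> dim V"
    and S_ge: "\<And>y. y \<in> V \<Longrightarrow> singular_value S i * norm y \<le> norm (S y)"
    by (rule exists_subspace_singular_value_le_norm[OF assms(2,5)]) blast
  have "inj (adjoint T)"
    unfolding linear_inj_iff_eq_0[OF lin] using norm_adj assms(3) by (metis mult_eq_0_iff norm_eq_zero order_less_irrefl)
  then have "dim (adjoint T ` V) = dim V"
    using dim_image_eq[OF lin, of V] by (simp add: inj_on_subset)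
  show ?thesis
  proof (rule singular_value_ge[OF linear_compose[OF assms(1,2)] linear_subspace_image[OF lin V(1)]])
    show "1 \<le> i" "i \<le> dim (adjoint T ` V)" using assms(5) V(2) \<open>dim (adjoint T ` V) = dim V\<close> by simp_all
    fix u assume "u \<in> adjoint T ` V"
    then obtain y where y: "y \<in> V" "u = adjoint T y" by blast
    have "c * singular_value S i * norm u = c\<^sup>2 * (singular_value S i * norm y)"
      using y norm_adj by (simp add: power2_eq_square algebra_simps)
    also have "\<dots> \<le> c\<^sup>2 * norm (S y)" using S_ge[OF y(1)] by (simp add: mult_left_mono)
    also have "\<dots> = norm ((S \<circ> T) u)"
      using assms(3) by (simp add: y(2) assms(4) linear_scale[OF assms(2)])
    finally show "c * singular_value S i * norm u \<le> norm ((S \<circ> T) u)" .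
  qed
qed

lemma singular_value_last_ge_coisometry:
  fixes T :: "'a::euclidean_space \<Rightarrow> 'b::euclidean_space"
  assumes "linear T" and "0 < c" and "\<And>y. T (adjoint T y) = c\<^sup>2 *\<^sub>R y"
  shows "c \<le> singular_value T DIM('b)"
proof -
  have "1 \<le> singular_value (id :: 'b \<Rightarrow> 'b) DIM('b)"
    by (rule singular_value_ge[OF linear_id subspace_UNIV]) (simp_all add: DIM_positive Suc_le_eq)
  then have "c \<le> c * singular_value (id :: 'b \<Rightarrow> 'b) DIM('b)"
    using assms(2) by simp
  also have "\<dots> \<le> singular_value T DIM('b)"
    using singular_value_comp_ge_coisometry[OF assms(1) linear_id assms(2,3), of "DIM('b)"]
    by (simp add: DIM_positive Suc_le_eq)
  finally show ?thesis .
qed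

lemma norm_right_singular_vector_eq_if_singular_values_equal:
  fixes T :: "'a::euclidean_space \<Rightarrow> 'b::euclidean_space"
  assumes "linear T" and "right_singular_vectors T DIM('a) v"
    and "singular_value T 1 = singular_value T DIM('b)" and "DIM('b) \<le> DIM('a)"
    and "l \<in> {1..DIM('b)}"
  shows "norm (T (v l)) = singular_value T 1"
proof (rule antisym)
  show "norm (T (v l)) \<le> singular_value T 1"
    using singular_value_eq_norm_right_singular_vector[OF assms(1,2), of l] assms(4,5)
      singular_value_le_singular_value_1[OF assms(1), of l] by simp
  have "singular_value T 1 = norm (T (v DIM('b)))"
    using singular_value_eq_norm_right_singular_vector[OF assms(1,2), of "DIM('b)"] assms(3,4)
    by (simp add: DIM_positive Suc_le_eq)
  also have "\<dots> \<le> norm (T (v l))"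
    using assms(2,4,5) by (simp add: right_singular_vectors_def)
  finally show "singular_value T 1 \<le> norm (T (v l))" .
qed

lemma coisometry_if_singular_values_equal:
  fixes T :: "'a::euclidean_space \<Rightarrow> 'b::euclidean_space"
  assumes "linear T" and "0 < singular_value T 1" and "singular_value T 1 = singular_value T DIM('b)"
  shows "T (adjoint T y) = (singular_value T 1)\<^sup>2 *\<^sub>R y"
proof -
  define c where "c = singular_value T 1"
  have "DIM('b) \<le> DIM('a)"
    using assms(2,3) singular_value_eq_0[of "DIM('b)" T] by (cases "DIM('b) \<le> DIM('a)") auto
  obtain v where v: "right_singular_vectors T DIM('a) v"
    using right_singular_vectors_exist[OF assms(1)] .
  note norm_Tv = norm_right_singular_vector_eq_if_singular_values_equal[OF assms(1) v assms(3)
      \<open>DIM('b) \<le> DIM('a)\<close>, folded c_def]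
  define w where "w l = (1 / c) *\<^sub>R T (v l)" for l
  have w: "orthonormal_family DIM('b) w"
    using norm_Tv v assms(2) \<open>DIM('b) \<le> DIM('a)\<close>
    unfolding right_singular_vectors_def orthonormal_family_def w_def c_def by auto
  have "norm (adjoint T (w l)) = c" if l: "l \<in> {1..DIM('b)}" for l
  proof (rule antisym)
    show "norm (adjoint T (w l)) \<le> c"
      using norm_adjoint_le[OF assms(1), of "w l"] w l unfolding c_def by (simp add: orthonormal_family_def)
    have "c = adjoint T (w l) \<bullet> v l"
      using norm_Tv[OF l] assms(2)
      by (simp add: adjoint_clauses(2)[OF assms(1)] w_def c_def power2_norm_eq_inner[symmetric] power2_eq_square)
    also have "\<dots> \<le> norm (adjoint T (w l)) * norm (v l)" by (rule norm_cauchy_schwarz)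
    finally show "c \<le> norm (adjoint T (w l))"
      using v l \<open>DIM('b) \<le> DIM('a)\<close> by (simp add: right_singular_vectors_def orthonormal_family_def)
  qed
  then show ?thesis
    using coisometry_if_norm_adjoint_eq_on_basis[OF assms(1) w norm_adjoint_le[OF assms(1)]]
    unfolding c_def by blast
qed

lemma singular_value_comp_eq_if_singular_values_equal:
  fixes T :: "'a::euclidean_space \<Rightarrow> 'b::euclidean_space" and S :: "'b \<Rightarrow> 'c::real_inner"
  assumes "linear T" and "linear S" and "singular_value T 1 = singular_value T DIM('b)"
  shows "singular_value (S \<circ> T) i = singular_value T 1 * singular_value S i"
proof -
  have le: "singular_value (S \<circ> T) i \<le> singular_value T 1 * singular_value S i"
    by (rule singular_value_comp_le[OF assms(1,2)])
  have ge0: "0 \<le> singular_value (S \<circ> T) i"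
    by (rule singular_value_nonneg[OF linear_compose[OF assms(1,2)]])
  show ?thesis
  proof (cases "0 < singular_value T 1 \<and> i \<in> {1..DIM('b)}")
    case True
    then have pos: "0 < singular_value T 1" and i: "i \<in> {1..DIM('b)}" by auto
    have "singular_value T 1 * singular_value S i \<le> singular_value (S \<circ> T) i"
      by (rule singular_value_comp_ge_coisometry[OF assms(1,2) pos
            coisometry_if_singular_values_equal[OF assms(1) pos assms(3)] i])
    then show ?thesis using le by simp
  next
    case False
    then have "singular_value T 1 = 0 \<or> singular_value S i = 0"
      using singular_value_nonneg[OF assms(1), of 1] singular_value_eq_0[of i S] by auto
    then show ?thesis using le ge0 by auto
  qed
qed

lemma singular_value_pos_if_inj:
  fixes S :: "'a::euclidean_space \<Rightarrow> 'b::real_inner"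
  assumes "linear S" and "inj S" and "i \<in> {1..DIM('a)}"
  shows "0 < singular_value S i"
proof -
  obtain v where v: "right_singular_vectors S DIM('a) v"
    using right_singular_vectors_exist[OF assms(1)] .
  then have "norm (v i) = 1"
    using assms(3) unfolding right_singular_vectors_def orthonormal_family_def by blast
  then have "v i \<noteq> 0" by auto
  then have "S (v i) \<noteq> 0" using assms(1,2) by (metis injD linear_0)
  then show ?thesis
    using singular_value_eq_norm_right_singular_vector[OF assms(1) v assms(3)] by simp
qed

text \<open>Both sides equal the squared Frobenius norm of \<open>S \<circ> T\<close>, computed in the orthonormal basis \<open>u\<close> of
  the domain and, after moving \<open>T\<close> across the inner product, in the singular basis \<open>w\<close> of \<open>S\<close>.\<close>
lemma sum_norm_comp_sq_eq_adjoint: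
  fixes T :: "'a::euclidean_space \<Rightarrow> 'b::euclidean_space" and S :: "'b \<Rightarrow> 'c::real_inner"
  assumes "linear T" and "linear S" and "orthonormal_family DIM('a) u"
    and "right_singular_vectors S DIM('b) w"
  shows "(\<Sum>j=1..DIM('a). (norm (S (T (u j))))\<^sup>2)
    = (\<Sum>l=1..DIM('b). (norm (S (w l)))\<^sup>2 * (norm (adjoint T (w l)))\<^sup>2)"
proof -
  have w: "orthonormal_family DIM('b) w"
    "\<And>i j. i \<in> {1..DIM('b)} \<Longrightarrow> j \<in> {1..DIM('b)} \<Longrightarrow> i \<noteq> j \<Longrightarrow> S (w i) \<bullet> S (w j) = 0"
    using assms(4) unfolding right_singular_vectors_def by blast+
  have swap: "T (u j) \<bullet> w l = adjoint T (w l) \<bullet> u j" for j l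
    by (metis adjoint_clauses(1)[OF assms(1)] inner_commute)
  have "(\<Sum>j=1..DIM('a). (norm (S (T (u j))))\<^sup>2)
      = (\<Sum>j=1..DIM('a). \<Sum>l=1..DIM('b). (adjoint T (w l) \<bullet> u j)\<^sup>2 * (norm (S (w l)))\<^sup>2)"
    unfolding swap[symmetric] by (intro sum.cong refl norm_image_sq_expansion[OF assms(2) w])
  also have "\<dots> = (\<Sum>l=1..DIM('b). (\<Sum>j=1..DIM('a). (adjoint T (w l) \<bullet> u j)\<^sup>2) * (norm (S (w l)))\<^sup>2)"
    by (subst sum.swap) (simp add: sum_distrib_right)
  also have "\<dots> = (\<Sum>l=1..DIM('b). (norm (S (w l)))\<^sup>2 * (norm (adjoint T (w l)))\<^sup>2)"
    by (simp add: parseval_orthonormal_family[OF assms(3)] mult.commute)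
  finally show ?thesis .
qed

lemma sum_norm_sq_norm_adjoint_sq_if_singular_value_comp_eq:
  fixes T :: "'a::euclidean_space \<Rightarrow> 'b::euclidean_space" and S :: "'b \<Rightarrow> 'c::real_inner"
  assumes "linear T" and "linear S" and w: "right_singular_vectors S DIM('b) w"
    and "DIM('b) \<le> DIM('a)"
    and comp_eq: "\<And>i. singular_value (S \<circ> T) i = singular_value T 1 * singular_value S i"
  shows "(\<Sum>l=1..DIM('b). (norm (S (w l)))\<^sup>2 * (norm (adjoint T (w l)))\<^sup>2)
    = (\<Sum>l=1..DIM('b). (norm (S (w l)))\<^sup>2 * (singular_value T 1)\<^sup>2)"
proof -
  obtain u where u: "right_singular_vectors (S \<circ> T) DIM('a) u"
    using right_singular_vectors_exist[OF linear_compose[OF assms(1,2)]] .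
  have "(\<Sum>l=1..DIM('b). (norm (S (w l)))\<^sup>2 * (norm (adjoint T (w l)))\<^sup>2)
      = (\<Sum>j=1..DIM('a). (norm (S (T (u j))))\<^sup>2)"
    using sum_norm_comp_sq_eq_adjoint[OF assms(1,2) _ w] u
    by (simp add: right_singular_vectors_def)
  also have "\<dots> = (\<Sum>j=1..DIM('a). (singular_value T 1 * singular_value S j)\<^sup>2)"
    using singular_value_eq_norm_right_singular_vector[OF linear_compose[OF assms(1,2)] u]
    by (intro sum.cong refl) (simp add: comp_eq)
  also have "\<dots> = (\<Sum>j=1..DIM('b). (singular_value T 1 * singular_value S j)\<^sup>2)"
    using assms(4) by (intro sum.mono_neutral_right) (auto simp: singular_value_eq_0)
  also have "\<dots> = (\<Sum>l=1..DIM('b). (norm (S (w l)))\<^sup>2 * (singular_value T 1)\<^sup>2)"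
    using singular_value_eq_norm_right_singular_vector[OF assms(2) w]
    by (intro sum.cong refl) (simp add: power_mult_distrib)
  finally show ?thesis .
qed

lemma norm_adjoint_eq_if_singular_value_comp_eq:
  fixes T :: "'a::euclidean_space \<Rightarrow> 'b::euclidean_space" and S :: "'b \<Rightarrow> 'c::real_inner"
  assumes "linear T" and "linear S" and "inj S" and w: "right_singular_vectors S DIM('b) w"
    and "DIM('b) \<le> DIM('a)"
    and comp_eq: "\<And>i. singular_value (S \<circ> T) i = singular_value T 1 * singular_value S i"
    and l: "l \<in> {1..DIM('b)}"
  shows "norm (adjoint T (w l)) = singular_value T 1"
proof -
  define c where "c = singular_value T 1"
  define f where "f l = (norm (S (w l)))\<^sup>2 * (c\<^sup>2 - (norm (adjoint T (w l)))\<^sup>2)" for l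
  have "sum f {1..DIM('b)} = 0"
    using sum_norm_sq_norm_adjoint_sq_if_singular_value_comp_eq[OF assms(1,2) w assms(5) comp_eq]
    by (simp add: f_def c_def algebra_simps sum_subtractf)
  moreover have "0 \<le> f l" if "l \<in> {1..DIM('b)}" for l
  proof -
    have "norm (adjoint T (w l)) \<le> c"
      using norm_adjoint_le[OF assms(1), of "w l"] w that
      by (simp add: c_def right_singular_vectors_def orthonormal_family_def)
    then show ?thesis by (simp add: f_def power_mono)
  qed
  ultimately have "f l = 0"
    using sum_nonneg_eq_0_iff[of "{1..DIM('b)}" f] l by blast
  moreover have "norm (S (w l)) \<noteq> 0"
    using singular_value_pos_if_inj[OF assms(2,3) l]
      singular_value_eq_norm_right_singular_vector[OF assms(2) w l] by simp
  ultimately have "(norm (adjoint T (w l)))\<^sup>2 = c\<^sup>2" by (simp add: f_def)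
  then show ?thesis
    using singular_value_nonneg[OF assms(1), of 1] by (simp add: c_def power2_eq_iff_nonneg)
qed

lemma singular_values_equal_if_singular_value_comp_eq:
  fixes T :: "'a::euclidean_space \<Rightarrow> 'b::euclidean_space" and S :: "'b \<Rightarrow> 'c::real_inner"
  assumes "linear T" and "linear S" and "inj S"
    and comp_eq: "\<And>i. singular_value (S \<circ> T) i = singular_value T 1 * singular_value S i"
  shows "singular_value T 1 = singular_value T DIM('b)"
proof -
  define c where "c = singular_value T 1"
  have DIM_b: "DIM('b) \<in> {1..DIM('b)}" by (simp add: DIM_positive Suc_le_eq)
  have upper: "singular_value T DIM('b) \<le> c" "0 \<le> singular_value T DIM('b)"
    unfolding c_def by (rule singular_value_le_singular_value_1[OF assms(1)] singular_value_nonneg[OF assms(1)])+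
  show ?thesis
  proof (cases "c = 0")
    case False
    then have "0 < c" using singular_value_nonneg[OF assms(1), of 1] by (simp add: c_def)
    have "DIM('b) \<le> DIM('a)"
    proof (rule ccontr)
      assume "\<not> DIM('b) \<le> DIM('a)"
      then have "singular_value (S \<circ> T) DIM('b) = 0" by (simp add: singular_value_eq_0)
      then show False
        using comp_eq[of "DIM('b)"] \<open>0 < c\<close> singular_value_pos_if_inj[OF assms(2,3) DIM_b]
        by (simp add: c_def)
    qed
    obtain w where w: "right_singular_vectors S DIM('b) w"
      using right_singular_vectors_exist[OF assms(2)] .
    then have "orthonormal_family DIM('b) w" by (simp add: right_singular_vectors_def)
    then have "T (adjoint T y) = c\<^sup>2 *\<^sub>R y" for y
      unfolding c_def
      by (rule coisometry_if_norm_adjoint_eq_on_basis[OF assms(1) _ norm_adjoint_le[OF assms(1)]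
            norm_adjoint_eq_if_singular_value_comp_eq[OF assms(1-3) w \<open>DIM('b) \<le> DIM('a)\<close> comp_eq]])
    then have "c \<le> singular_value T DIM('b)"
      by (rule singular_value_last_ge_coisometry[OF assms(1) \<open>0 < c\<close>])
    then show ?thesis using upper by (simp add: c_def)
  qed (use upper in \<open>simp add: c_def\<close>)
qed

section \<open>Schatten norms\<close>

lemma schatten_norm_eq_sum:
  fixes A :: "'a::euclidean_space \<Rightarrow> 'b::real_normed_vector"
  assumes "p = ereal r" and "DIM('a) \<le> N"
  shows "schatten_norm p A = (\<Sum>i=1..N. singular_value A i powr r) powr (1 / r)"
proof -
  have "(\<Sum>i=1..DIM('a). singular_value A i powr r) = (\<Sum>i=1..N. singular_value A i powr r)"
    using assms(2) by (intro sum.mono_neutral_left) (auto simp: singular_value_eq_0)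
  then show ?thesis using assms(1) by (simp add: schatten_norm_def)
qed

lemma sum_powr_root_mono:
  fixes f g :: "'i \<Rightarrow> real"
  assumes "0 < r" and "\<And>i. i \<in> I \<Longrightarrow> 0 \<le> f i" and "\<And>i. i \<in> I \<Longrightarrow> f i \<le> g i"
  shows "(\<Sum>i\<in>I. f i powr r) powr (1 / r) \<le> (\<Sum>i\<in>I. g i powr r) powr (1 / r)"
  using assms by (intro powr_mono2 sum_mono sum_nonneg) auto

lemma sum_powr_root_eq_iff:
  fixes f g :: "'i \<Rightarrow> real"
  assumes "finite I" and "0 < r" and "\<And>i. i \<in> I \<Longrightarrow> 0 \<le> f i" and "\<And>i. i \<in> I \<Longrightarrow> f i \<le> g i"
  shows "(\<Sum>i\<in>I. f i powr r) powr (1 / r) = (\<Sum>i\<in>I. g i powr r) powr (1 / r) \<longleftrightarrow> (\<forall>i\<in>I. f i = g i)"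
proof
  assume eq: "(\<Sum>i\<in>I. f i powr r) powr (1 / r) = (\<Sum>i\<in>I. g i powr r) powr (1 / r)"
  show "\<forall>i\<in>I. f i = g i"
  proof (rule ccontr)
    assume "\<not> (\<forall>i\<in>I. f i = g i)"
    then obtain i where "i \<in> I" "f i < g i" using assms(4) by force
    then have "(\<Sum>i\<in>I. f i powr r) < (\<Sum>i\<in>I. g i powr r)"
      using assms by (intro sum_strict_mono_ex1) (auto intro: powr_mono2 powr_less_mono2)
    then have "(\<Sum>i\<in>I. f i powr r) powr (1 / r) < (\<Sum>i\<in>I. g i powr r) powr (1 / r)"
      using assms(2) by (intro powr_less_mono2 sum_nonneg) auto
    then show False using eq by simp
  qed
qed simp

lemma sum_powr_root_mult:
  fixes g :: "'i \<Rightarrow> real"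
  assumes "0 < r" and "0 \<le> c" and "\<And>i. i \<in> I \<Longrightarrow> 0 \<le> g i"
  shows "(\<Sum>i\<in>I. (c * g i) powr r) powr (1 / r) = c * (\<Sum>i\<in>I. g i powr r) powr (1 / r)"
proof -
  have "(\<Sum>i\<in>I. (c * g i) powr r) = c powr r * (\<Sum>i\<in>I. g i powr r)"
    using assms(2,3) by (simp add: powr_mult sum_distrib_left)
  then show ?thesis
    using assms by (simp add: powr_mult powr_powr sum_nonneg powr_one)
qed

lemma schatten_norm_comp_le:
  fixes T :: "'a::euclidean_space \<Rightarrow> 'b::euclidean_space" and S :: "'b \<Rightarrow> 'c::real_inner"
  assumes "linear T" and "linear S" and "0 < p"
  shows "schatten_norm p (S \<circ> T) \<le> singular_value T 1 * schatten_norm p S"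
proof (cases p)
  case (real r)
  then have "0 < r" using assms(3) by simp
  define N where "N = max DIM('a) DIM('b)"
  have S_sum: "schatten_norm p S = (\<Sum>i=1..N. singular_value S i powr r) powr (1 / r)"
    by (rule schatten_norm_eq_sum[OF real]) (simp add: N_def)
  have "schatten_norm p (S \<circ> T) = (\<Sum>i=1..N. singular_value (S \<circ> T) i powr r) powr (1 / r)"
    by (rule schatten_norm_eq_sum[OF real]) (simp add: N_def)
  also have "\<dots> \<le> (\<Sum>i=1..N. (singular_value T 1 * singular_value S i) powr r) powr (1 / r)"
    using \<open>0 < r\<close> singular_value_comp_le[OF assms(1,2)]
      singular_value_nonneg[OF linear_compose[OF assms(1,2)]]
    by (intro sum_powr_root_mono) auto
  also have "\<dots> = singular_value T 1 * schatten_norm p S"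
    using \<open>0 < r\<close> singular_value_nonneg[OF assms(1)] singular_value_nonneg[OF assms(2)]
    by (simp add: sum_powr_root_mult S_sum)
  finally show ?thesis .
qed (use assms singular_value_comp_le[OF assms(1,2), of 1] in \<open>simp_all add: schatten_norm_def\<close>)

lemma schatten_norm_comp_eq_iff:
  fixes T :: "'a::euclidean_space \<Rightarrow> 'b::euclidean_space" and S :: "'b \<Rightarrow> 'c::real_inner"
  assumes "linear T" and "linear S" and "inj S" and "0 < p" and "p < \<infinity>"
  shows "schatten_norm p (S \<circ> T) = singular_value T 1 * schatten_norm p S
    \<longleftrightarrow> singular_value T 1 = singular_value T DIM('b)"
proof -
  obtain r where real: "p = ereal r" and "0 < r" using assms(4,5) by (cases p) auto
  define N where "N = max DIM('a) DIM('b)"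
  have S_sum: "schatten_norm p S = (\<Sum>i=1..N. singular_value S i powr r) powr (1 / r)"
    by (rule schatten_norm_eq_sum[OF real]) (simp add: N_def)
  have ST_sum: "schatten_norm p (S \<circ> T) = (\<Sum>i=1..N. singular_value (S \<circ> T) i powr r) powr (1 / r)"
    by (rule schatten_norm_eq_sum[OF real]) (simp add: N_def)
  have "schatten_norm p (S \<circ> T) = singular_value T 1 * schatten_norm p S
      \<longleftrightarrow> (\<Sum>i=1..N. singular_value (S \<circ> T) i powr r) powr (1 / r)
        = (\<Sum>i=1..N. (singular_value T 1 * singular_value S i) powr r) powr (1 / r)"
    using \<open>0 < r\<close> singular_value_nonneg[OF assms(1)] singular_value_nonneg[OF assms(2)]
    by (simp add: sum_powr_root_mult S_sum ST_sum)
  also have "\<dots> \<longleftrightarrow> (\<forall>i\<in>{1..N}. singular_value (S \<circ> T) i = singular_value T 1 * singular_value S i)"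
    using \<open>0 < r\<close> singular_value_comp_le[OF assms(1,2)]
      singular_value_nonneg[OF linear_compose[OF assms(1,2)]]
    by (intro sum_powr_root_eq_iff) auto
  also have "\<dots> \<longleftrightarrow> (\<forall>i. singular_value (S \<circ> T) i = singular_value T 1 * singular_value S i)"
  proof -
    have "singular_value (S \<circ> T) i = singular_value T 1 * singular_value S i" if "i \<notin> {1..N}" for i
      using that by (cases "i = 0") (auto simp: N_def singular_value_eq_0)
    then show ?thesis by blast
  qed
  also have "\<dots> \<longleftrightarrow> singular_value T 1 = singular_value T DIM('b)"
    using singular_values_equal_if_singular_value_comp_eq[OF assms(1-3)]
      singular_value_comp_eq_if_singular_values_equal[OF assms(1,2)] by blast
  finally show ?thesis .
qed

theorem lemma3p6:
  fixes T :: "real^'n \<Rightarrow> real^'m" and S :: "real^'m \<Rightarrow> real^'k" and p :: ereal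
  assumes "linear T" and "linear S" and "1 \<le> p"
  shows "schatten_norm p (S \<circ> T) \<le> singular_value T 1 * schatten_norm p S
    \<and> ((inj S \<and> p < \<infinity>) \<longrightarrow>
        (schatten_norm p (S \<circ> T) = singular_value T 1 * schatten_norm p S
          \<longleftrightarrow> singular_value T 1 = singular_value T CARD('m)))"
proof -
  have "0 < p" by (rule less_le_trans[OF _ assms(3)]) simp
  then show ?thesis
    using schatten_norm_comp_le[OF assms(1,2)] schatten_norm_comp_eq_iff[OF assms(1,2)] by simp
qed

end
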